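(* Let $S$ be a monoid such that the words $yxxty$ and $ytxxy$ (with $x,y,t$ distinct variables) are isoterms for $S$. Then for every $n\ge1$ the word $z_1t_1z_2t_2\cdots z_nt_n\,xx\,z_1z_2\cdots z_n$ (with $x,z_1,\dots,z_n,t_1,\dots,t_n$ distinct variables) is an isoterm for $S$.
   Context: Words are elements of the free semigroup over a countably infinite alphabet of variables. A monoid $S$ satisfies an identity $\mathbf u\approx\mathbf v$ if both sides are equal under every evaluation of the variables in $S$. A word $\mathbf w$ is an isoterm for $S$ if $S$ satisfies no identity $\mathbf w\approx\mathbf w'$ with $\mathbf w'\ne\mathbf w$. *)

theory Defs
  imports Main
begin

text \<open>Variables are natural numbers (a countably infinite alphabet); words are
nonempty lists of variables (elements of the free semigroup).\<close>

type_synonym word = "nat list"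

definition is_word :: "word \<Rightarrow> bool" where
  "is_word w \<longleftrightarrow> w \<noteq> []"

definition eval_word :: "(nat \<Rightarrow> 'a::monoid_mult) \<Rightarrow> word \<Rightarrow> 'a" where
  "eval_word \<phi> w = prod_list (map \<phi> w)"

definition satisfies :: "'a::monoid_mult itself \<Rightarrow> word \<Rightarrow> word \<Rightarrow> bool" where
  "satisfies S u v \<longleftrightarrow> (\<forall>\<phi> :: nat \<Rightarrow> 'a. eval_word \<phi> u = eval_word \<phi> v)"

definition isoterm :: "'a::monoid_mult itself \<Rightarrow> word \<Rightarrow> bool" where
  "isoterm S w \<longleftrightarrow> (\<forall>w'. is_word w' \<and> satisfies S w w' \<longrightarrow> w' = w)"

end

theory Submission
  imports Defs
begin

text \<open>Deleting letters from both sides of an identity preserves it, and renaming letters injectively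
shows that every word \<open>abcca\<close> is an isoterm once \<open>ytxxy\<close> is. Suppose \<open>w \<approx> v\<close> holds in \<open>S\<close>, where
\<open>w = z\<^sub>1t\<^sub>1\<dots>z\<^sub>nt\<^sub>n xx z\<^sub>1\<dots>z\<^sub>n\<close>. For \<open>i \<le> j\<close> the restriction of \<open>w\<close> to \<open>{z\<^sub>i, t\<^sub>j, x}\<close> is
\<open>z\<^sub>it\<^sub>jxxz\<^sub>i\<close>, so \<open>v\<close> has the same restriction. This forces \<open>v = P xx Q\<close>, where \<open>P\<close> lists each
\<open>z\<^sub>i, t\<^sub>i\<close> once and \<open>Q\<close> each \<open>z\<^sub>i\<close> once, and it forbids \<open>t\<^sub>p\<close> before \<open>z\<^sub>q\<close> in \<open>P\<close> for \<open>q \<le> p\<close>.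
The remaining orders are forbidden by transferring in the other direction: if \<open>z\<^sub>p\<close> preceded
\<open>t\<^sub>q\<close> in \<open>P\<close> (\<open>q < p\<close>), or \<open>z\<^sub>p\<close> preceded \<open>z\<^sub>q\<close> in \<open>Q\<close>, then a three-letter restriction of \<open>v\<close>
would be of the form \<open>abcca\<close>, so \<open>w\<close> would have the same restriction, which it has not.
Hence \<open>P\<close> and \<open>Q\<close> are sorted like \<open>z\<^sub>1t\<^sub>1\<dots>z\<^sub>nt\<^sub>n\<close> and \<open>z\<^sub>1\<dots>z\<^sub>n\<close>, i.e. \<open>v = w\<close>.\<close>

lemma eval_word_append: "eval_word \<phi> (u @ v) = eval_word \<phi> u * eval_word \<phi> v"
  by (simp add: eval_word_def)

lemma eval_word_filter:
  "eval_word \<phi> (filter K u) = eval_word (\<lambda>c. if K c then \<phi> c else 1) u"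
  by (induction u) (auto simp: eval_word_def)

lemma satisfies_filter: "satisfies S u v \<Longrightarrow> satisfies S (filter K u) (filter K v)"
  unfolding satisfies_def by (simp add: eval_word_filter)

lemma satisfies_sym: "satisfies S u v \<Longrightarrow> satisfies S v u"
  unfolding satisfies_def by simp

lemma satisfies_map: "satisfies S u v \<Longrightarrow> satisfies S (map \<rho> u) (map \<rho> v)"
  unfolding satisfies_def eval_word_def by (simp add: comp_def)

lemma isoterm_satisfies_eq:
  assumes iso: "isoterm S u" and "u \<noteq> []" and uv: "satisfies S u v"
  shows "v = u"
proof (cases "v = []")
  case True
  \<comment> \<open>then \<open>u\<close> evaluates to \<open>1\<close> everywhere, so \<open>u \<approx> uu\<close> would hold\<close>
  then have "satisfies S u (u @ u)"
    using uv unfolding satisfies_def by (simp add: eval_word_append eval_word_def)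
  moreover have "u @ u \<noteq> []" using \<open>u \<noteq> []\<close> by simp
  ultimately have "u @ u = u" using iso unfolding isoterm_def is_word_def by blast
  with \<open>u \<noteq> []\<close> show ?thesis by simp
next
  case False
  then show ?thesis using iso uv unfolding isoterm_def is_word_def by blast
qed

lemma isoterm_filter_transfer:
  assumes "satisfies S u v" "isoterm S (filter K u)" "filter K u \<noteq> []"
  shows "filter K v = filter K u"
  using assms by (blast intro: isoterm_satisfies_eq satisfies_filter)

lemma isoterm_inj_map:
  assumes iso: "isoterm S (map \<rho> u)" and "inj \<rho>"
  shows "isoterm S u"
  unfolding isoterm_def
proof (intro allI impI)
  fix v assume "is_word v \<and> satisfies S u v"
  then have "is_word (map \<rho> v)" "satisfies S (map \<rho> u) (map \<rho> v)"
    by (auto simp: is_word_def satisfies_map)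
  then have "map \<rho> v = map \<rho> u" using iso unfolding isoterm_def by blast
  then show "v = u" using \<open>inj \<rho>\<close> by simp
qed

lemma inj_extend_nat:
  fixes f :: "nat \<Rightarrow> nat"
  assumes "finite A" "inj_on f A"
  shows "\<exists>g. inj g \<and> (\<forall>a\<in>A. g a = f a)"
proof -
  define m where "m = Suc (Max (f ` A))"
  have small: "f a < m" if "a \<in> A" for a
    using that \<open>finite A\<close> by (simp add: m_def le_imp_less_Suc)
  define g where "g a = (if a \<in> A then f a else a + m)" for a
  have "f a \<noteq> b + m" "b + m \<noteq> f a" if "a \<in> A" for a b
    using small[OF that] by simp_all
  then have "inj g"
    using \<open>inj_on f A\<close> by (auto simp: inj_def g_def dest: inj_onD)
  then show ?thesis unfolding g_def by auto
qed

lemma isoterm_abcca_if_ytxxy: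
  assumes iso: "isoterm S [y, t, x, x, y]" and "distinct [x, y, t]" and "distinct [a, b, c]"
  shows "isoterm S [a, b, c, c, a]"
proof -
  define f where "f d = (if d = a then y else if d = b then t else x)" for d
  have "inj_on f {a, b, c}" using assms(2,3) by (auto simp: f_def inj_on_def)
  then obtain g where "inj g" and g: "\<forall>d\<in>{a, b, c}. g d = f d"
    using inj_extend_nat[of "{a, b, c}" f] by auto
  have "map g [a, b, c, c, a] = [y, t, x, x, y]" using g assms(3) by (simp add: f_def)
  then show ?thesis using isoterm_inj_map[of S g] iso \<open>inj g\<close> by simp
qed

lemma concat_map_eq_single:
  "distinct xs \<Longrightarrow> i \<in> set xs \<Longrightarrow> (\<forall>k\<in>set xs. k \<noteq> i \<longrightarrow> g k = []) \<Longrightarrow>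
   concat (map g xs) = g i"
  by (induction xs) auto

lemma concat_map_eq_pair:
  "sorted xs \<Longrightarrow> distinct xs \<Longrightarrow> i < j \<Longrightarrow> i \<in> set xs \<Longrightarrow> j \<in> set xs \<Longrightarrow>
   (\<forall>k\<in>set xs. k \<noteq> i \<longrightarrow> k \<noteq> j \<longrightarrow> g k = []) \<Longrightarrow> concat (map g xs) = g i @ g j"
proof (induction xs)
  case (Cons a xs)
  show ?case
  proof (cases "a = i")
    case True
    then have "concat (map g xs) = g j"
      using Cons.prems by (intro concat_map_eq_single) auto
    with True show ?thesis by simp
  next
    case False
    with Cons show ?thesis by auto
  qed
qed simp

lemma filter_map_eq_concat: "filter K (map f xs) = concat (map (\<lambda>i. filter K [f i]) xs)"
  by (induction xs) auto

lemma sorted_wrt_concat_even_odd: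
  "sorted_wrt (<) ns \<Longrightarrow> sorted_wrt (<) (concat (map (\<lambda>i. [2 * i, 2 * i + 1 :: nat]) ns))"
  by (induction ns) (auto simp: sorted_wrt_append)

lemma split_first_occurrence_unique:
  "x \<notin> set A \<Longrightarrow> x \<notin> set D \<Longrightarrow> A @ x # R = D @ x # R' \<Longrightarrow> A = D \<and> R = R'"
  by (induction A arbitrary: D) (auto simp: Cons_eq_append_conv)

lemma split_two_occurrences_unique:
  assumes "A @ x # B @ x # C = D @ x # E @ x # F"
    and "x \<notin> set A" "x \<notin> set B" "x \<notin> set D" "x \<notin> set E"
  shows "A = D \<and> B = E \<and> C = F"
proof -
  have "A = D" "B @ x # C = E @ x # F"
    using split_first_occurrence_unique[OF assms(2,4,1)] by simp_all
  then show ?thesis using split_first_occurrence_unique[OF assms(3,5)] by simp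
qed

lemma split_two_occurrences:
  assumes "filter (\<lambda>c. c = x) u = [x, x]"
  obtains P M Q where "u = P @ x # M @ x # Q" "x \<notin> set P" "x \<notin> set M" "x \<notin> set Q"
proof -
  have "x \<in> set (filter (\<lambda>c. c = x) u)" using assms by simp
  then have "x \<in> set u" by simp
  then obtain P R where u: "u = P @ x # R" "x \<notin> set P" by (meson split_list_first)
  have "filter (\<lambda>c. c = x) P = []" using u(2) by (auto simp: filter_empty_conv)
  then have "filter (\<lambda>c. c = x) R = [x]" using assms u(1) by simp
  then have "x \<in> set (filter (\<lambda>c. c = x) R)" by simp
  then have "x \<in> set R" by simp
  then obtain M Q where R: "R = M @ x # Q" "x \<notin> set M" by (meson split_list_first)
  have "filter (\<lambda>c. c = x) M = []" using R(2) by (auto simp: filter_empty_conv)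
  then have "filter (\<lambda>c. c = x) Q = []" using \<open>filter (\<lambda>c. c = x) R = [x]\<close> R(1) by simp
  then have "x \<notin> set Q" by (auto simp: filter_empty_conv)
  then show ?thesis using that u R by blast
qed

lemma distinct_if_filter_singletons:
  "(\<forall>a\<in>set L. filter (\<lambda>c. c = a) L = [a]) \<Longrightarrow> distinct L"
proof (induction L)
  case (Cons c L)
  have "filter (\<lambda>d. d = c) L = []" using Cons.prems by simp
  then have "c \<notin> set L" by (auto simp: filter_empty_conv)
  moreover have "filter (\<lambda>d. d = a) L = [a]" if "a \<in> set L" for a
  proof -
    have "filter (\<lambda>d. d = a) (c # L) = [a]" by (rule bspec[OF Cons.prems]) (simp add: that)
    moreover have "a \<noteq> c" using that \<open>c \<notin> set L\<close> by auto
    ultimately show ?thesis by simp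
  qed
  ultimately show ?case using Cons.IH by simp
qed simp

lemma filter_eq_singleton:
  assumes "distinct L" "a \<in> set L" "K a" "\<forall>c\<in>set L. K c \<longrightarrow> c = a"
  shows "filter K L = [a]"
proof -
  obtain L1 L2 where L: "L = L1 @ a # L2" using split_list[OF \<open>a \<in> set L\<close>] by blast
  have "a \<notin> set L1 \<union> set L2" using \<open>distinct L\<close> unfolding L by simp
  then have "\<forall>c\<in>set L1 \<union> set L2. \<not> K c" using assms(4) unfolding L by auto
  then show ?thesis unfolding L using \<open>K a\<close> by (simp add: filter_empty_conv)
qed

lemma filter_eq_filter_filter: "K a \<Longrightarrow> filter (\<lambda>c. c = a) (filter K xs) = filter (\<lambda>c. c = a) xs"
  by (auto intro: filter_cong)

definition precedes :: "'a list \<Rightarrow> 'a \<Rightarrow> 'a \<Rightarrow> bool" where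
  "precedes L a b \<longleftrightarrow> (\<exists>L1 L2 L3. L = L1 @ a # L2 @ b # L3)"

lemma filter_eq_if_precedes:
  assumes "distinct L" "precedes L a b" "K a" "K b" "\<forall>c\<in>set L. K c \<longrightarrow> c = a \<or> c = b"
  shows "filter K L = [a, b]"
proof -
  obtain L1 L2 L3 where L: "L = L1 @ a # L2 @ b # L3"
    using \<open>precedes L a b\<close> unfolding precedes_def by blast
  have "a \<notin> set L1 \<union> set L2 \<union> set L3" "b \<notin> set L1 \<union> set L2 \<union> set L3"
    using \<open>distinct L\<close> unfolding L by auto
  then have "\<forall>c\<in>set L1 \<union> set L2 \<union> set L3. \<not> K c" using assms(5) unfolding L by auto
  then show ?thesis unfolding L using \<open>K a\<close> \<open>K b\<close> by (simp add: filter_empty_conv)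
qed

lemma precedes_cases:
  assumes "precedes L a b" "c \<in> set L" "c \<noteq> a" "c \<noteq> b"
  shows "precedes L c b \<or> precedes L a c"
proof -
  obtain L1 L2 L3 where L: "L = L1 @ a # L2 @ b # L3"
    using assms(1) unfolding precedes_def by blast
  with assms(2-4) consider "c \<in> set L1" | "c \<in> set L2" | "c \<in> set L3" by auto
  then show ?thesis
  proof cases
    case 1
    then obtain A B where "L1 = A @ c # B" by (meson split_list)
    then have "L = A @ c # (B @ a # L2) @ b # L3" using L by simp
    then show ?thesis unfolding precedes_def by blast
  next
    case 2
    then obtain A B where "L2 = A @ c # B" by (meson split_list)
    then have "L = (L1 @ a # A) @ c # B @ b # L3" using L by simp
    then show ?thesis unfolding precedes_def by blast
  next
    case 3
    then obtain A B where "L3 = A @ c # B" by (meson split_list)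
    then have "L = L1 @ a # (L2 @ b # A) @ c # B" using L by simp
    then show ?thesis unfolding precedes_def by blast
  qed
qed

lemma precedes_Cons: "precedes L a b \<Longrightarrow> precedes (c # L) a b"
proof -
  assume "precedes L a b"
  then obtain L1 L2 L3 where "L = L1 @ a # L2 @ b # L3" unfolding precedes_def by blast
  then have "c # L = (c # L1) @ a # L2 @ b # L3" by simp
  then show ?thesis unfolding precedes_def by blast
qed

lemma precedes_Cons_head: "b \<in> set L \<Longrightarrow> precedes (c # L) c b"
proof -
  assume "b \<in> set L"
  then obtain A B where "L = A @ b # B" by (meson split_list)
  then have "c # L = [] @ c # A @ b # B" by simp
  then show ?thesis unfolding precedes_def by blast
qed

lemma sorted_wrt_if_precedes:
  "(\<And>a b. precedes L a b \<Longrightarrow> R a b) \<Longrightarrow> sorted_wrt R L"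
  by (induction L) (simp_all add: precedes_Cons precedes_Cons_head)

lemma sorted_wrt_rank_unique:
  fixes r :: "'a \<Rightarrow> 'b::linorder"
  assumes "sorted_wrt (\<lambda>a b. r a < r b) xs" "sorted_wrt (\<lambda>a b. r a < r b) ys" "set xs = set ys"
  shows "xs = ys"
  using assms
proof (induction xs arbitrary: ys)
  case (Cons a xs)
  then obtain b ys' where ys: "ys = b # ys'" by (cases ys) auto
  have "a = b"
  proof (rule ccontr)
    assume "a \<noteq> b"
    then have "b \<in> set xs" "a \<in> set ys'" using Cons.prems(3) ys by auto
    then show False using Cons.prems(1,2) ys by fastforce
  qed
  moreover have "a \<notin> set xs" "a \<notin> set ys'" using Cons.prems(1,2) ys \<open>a = b\<close> by auto
  ultimately have "set xs = set ys'" using Cons.prems(3) ys by auto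
  then show ?case using Cons ys \<open>a = b\<close> by simp
qed simp

locale zt_word =
  fixes S :: "'a::monoid_mult itself" and ns :: "nat list" and x :: nat and z t :: "nat \<Rightarrow> nat"
  assumes isoterm_abcca: "\<And>a b c. distinct [a, b, c] \<Longrightarrow> isoterm S [a, b, c, c, a]"
    and ns_nonempty: "ns \<noteq> []"
    and ns_increasing: "sorted_wrt (<) ns"
    and distinct_letters: "distinct (x # map z ns @ map t ns)"
begin

abbreviation zt_part :: word where "zt_part \<equiv> concat (map (\<lambda>i. [z i, t i]) ns)"
abbreviation z_part :: word where "z_part \<equiv> map z ns"
abbreviation w :: word where "w \<equiv> zt_part @ [x, x] @ z_part"

lemma ns_sorted_distinct: "sorted ns" "distinct ns"
  using ns_increasing by (simp_all add: strict_sorted_iff)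

lemma letters_distinct:
  "inj_on z (set ns)" "inj_on t (set ns)" "z ` set ns \<inter> t ` set ns = {}"
  "x \<notin> z ` set ns" "x \<notin> t ` set ns"
  using distinct_letters by (simp_all add: distinct_map)

lemma z_eq_iff [simp]: "i \<in> set ns \<Longrightarrow> j \<in> set ns \<Longrightarrow> z i = z j \<longleftrightarrow> i = j"
  using letters_distinct(1) by (auto dest: inj_onD)

lemma t_eq_iff [simp]: "i \<in> set ns \<Longrightarrow> j \<in> set ns \<Longrightarrow> t i = t j \<longleftrightarrow> i = j"
  using letters_distinct(2) by (auto dest: inj_onD)

lemma letters_neq [simp]:
  assumes "i \<in> set ns" "j \<in> set ns"
  shows "z i \<noteq> t j" "t j \<noteq> z i" "z i \<noteq> x" "x \<noteq> z i" "t i \<noteq> x" "x \<noteq> t i"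
  using assms letters_distinct(3-5) by blast+

lemma set_zt_part: "set zt_part = z ` set ns \<union> t ` set ns"
  by auto

lemma filter_zt_part: "filter K zt_part = concat (map (\<lambda>i. filter K [z i, t i]) ns)"
  by (simp add: filter_concat comp_def)

lemma filter_z_part: "filter K z_part = concat (map (\<lambda>i. filter K [z i]) ns)"
  by (rule filter_map_eq_concat)

lemma filter_w_ztx:
  assumes i: "i \<in> set ns" and j: "j \<in> set ns" and "i \<le> j"
  shows "filter (\<lambda>c. c = z i \<or> c = t j \<or> c = x) w = [z i, t j, x, x, z i]"
proof -
  let ?K = "\<lambda>c. c = z i \<or> c = t j \<or> c = x"
  have "filter ?K zt_part = [z i, t j]"
  proof (cases "i = j")
    case True
    then have "filter ?K zt_part = filter ?K [z i, t i]"
      unfolding filter_zt_part using i ns_sorted_distinct by (intro concat_map_eq_single) auto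
    then show ?thesis using i True by simp
  next
    case False
    with \<open>i \<le> j\<close> have "filter ?K zt_part = filter ?K [z i, t i] @ filter ?K [z j, t j]"
      unfolding filter_zt_part using i j ns_sorted_distinct by (intro concat_map_eq_pair) auto
    then show ?thesis using i j False by simp
  qed
  moreover have "filter ?K z_part = filter ?K [z i]"
    unfolding filter_z_part using i j ns_sorted_distinct by (intro concat_map_eq_single) auto
  ultimately show ?thesis using i j by simp
qed

lemma filter_w_tzx:
  assumes p: "p \<in> set ns" and q: "q \<in> set ns" and "q < p"
  shows "filter (\<lambda>c. c = z p \<or> c = t q \<or> c = x) w = [t q, z p, x, x, z p]"
proof -
  let ?K = "\<lambda>c. c = z p \<or> c = t q \<or> c = x"
  have "filter ?K zt_part = filter ?K [z q, t q] @ filter ?K [z p, t p]"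
    unfolding filter_zt_part using p q \<open>q < p\<close> ns_sorted_distinct
    by (intro concat_map_eq_pair) auto
  moreover have "filter ?K z_part = filter ?K [z p]"
    unfolding filter_z_part using p q ns_sorted_distinct by (intro concat_map_eq_single) auto
  ultimately show ?thesis using p q \<open>q < p\<close> by simp
qed

lemma filter_zt_part_ztz:
  assumes p: "p \<in> set ns" and q: "q \<in> set ns" and "q < p"
  shows "filter (\<lambda>c. c = z q \<or> c = t q \<or> c = z p) zt_part = [z q, t q, z p]"
proof -
  let ?K = "\<lambda>c. c = z q \<or> c = t q \<or> c = z p"
  have "filter ?K zt_part = filter ?K [z q, t q] @ filter ?K [z p, t p]"
    unfolding filter_zt_part using p q \<open>q < p\<close> ns_sorted_distinct
    by (intro concat_map_eq_pair) auto
  then show ?thesis using p q \<open>q < p\<close> by simp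
qed

lemma filter_w_ztz:
  assumes p: "p \<in> set ns" and q: "q \<in> set ns" and "q < p"
  shows "filter (\<lambda>c. c = z q \<or> c = t q \<or> c = z p) w = [z q, t q, z p, z q, z p]"
proof -
  let ?K = "\<lambda>c. c = z q \<or> c = t q \<or> c = z p"
  have "filter ?K z_part = filter ?K [z q] @ filter ?K [z p]"
    unfolding filter_z_part using p q \<open>q < p\<close> ns_sorted_distinct
    by (intro concat_map_eq_pair) auto
  then show ?thesis using filter_zt_part_ztz[OF assms] p q \<open>q < p\<close> by simp
qed

definition rank :: "nat \<Rightarrow> nat" where
  "rank c = (if c \<in> z ` set ns then 2 * the_inv_into (set ns) z c else 2 * the_inv_into (set ns) t c + 1)"

lemma rank_z [simp]: "i \<in> set ns \<Longrightarrow> rank (z i) = 2 * i"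
  using the_inv_into_f_f[OF letters_distinct(1)] by (simp add: rank_def)

lemma rank_t [simp]: "i \<in> set ns \<Longrightarrow> rank (t i) = 2 * i + 1"
  using the_inv_into_f_f[OF letters_distinct(2)] letters_distinct(3) by (auto simp: rank_def)

lemma sorted_zt_part: "sorted_wrt (\<lambda>a b. rank a < rank b) zt_part"
proof -
  have "map rank zt_part = concat (map (\<lambda>i. [rank (z i), rank (t i)]) ns)"
    by (simp add: map_concat comp_def)
  also have "\<dots> = concat (map (\<lambda>i. [2 * i, 2 * i + 1]) ns)"
    by (rule arg_cong[where f = concat], rule map_cong) simp_all
  finally have "sorted_wrt (<) (map rank zt_part)"
    using sorted_wrt_concat_even_odd[OF ns_increasing] by simp
  then show ?thesis by (simp add: sorted_wrt_map)
qed

lemma sorted_z_part: "sorted_wrt (\<lambda>a b. rank a < rank b) z_part"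
  unfolding sorted_wrt_map by (rule sorted_wrt_mono_rel[OF _ ns_increasing]) auto

end

locale zt_identity = zt_word +
  fixes v :: word
  assumes satisfies_w_v: "satisfies S w v"
begin

lemma filter_v_if_abcca:
  assumes "filter K w = [a, b, c, c, a]" "distinct [a, b, c]"
  shows "filter K v = [a, b, c, c, a]"
  using isoterm_filter_transfer[OF satisfies_w_v, of K] isoterm_abcca[OF assms(2)]
  unfolding assms(1) by simp

lemma filter_w_if_abcca:
  assumes "filter K v = [a, b, c, c, a]" "distinct [a, b, c]"
  shows "filter K w = [a, b, c, c, a]"
  using isoterm_filter_transfer[OF satisfies_sym[OF satisfies_w_v], of K] isoterm_abcca[OF assms(2)]
  unfolding assms(1) by simp

lemma filter_v_ztx:
  assumes "i \<in> set ns" "j \<in> set ns" "i \<le> j"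
  shows "filter (\<lambda>c. c = z i \<or> c = t j \<or> c = x) v = [z i, t j, x, x, z i]"
  using assms by (intro filter_v_if_abcca filter_w_ztx) auto

lemma set_v_subset: "set v \<subseteq> set w"
proof
  fix c assume "c \<in> set v"
  obtain i where i: "i \<in> set ns" using ns_nonempty by (cases ns) auto
  \<comment> \<open>adding the letters absent from \<open>w\<close> leaves the restriction of \<open>w\<close> unchanged\<close>
  let ?K = "\<lambda>c. c = z i \<or> c = t i \<or> c = x \<or> c \<notin> set w"
  have "filter ?K w = filter (\<lambda>c. c = z i \<or> c = t i \<or> c = x) w"
    by (rule filter_cong) auto
  also have "\<dots> = [z i, t i, x, x, z i]" using filter_w_ztx[OF i i] by simp
  finally have "filter ?K v = [z i, t i, x, x, z i]"
    using i by (intro filter_v_if_abcca) auto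
  moreover have "c \<in> set (filter ?K v)" if "c \<notin> set w" using that \<open>c \<in> set v\<close> by simp
  moreover have "{z i, t i, x} \<subseteq> set w" using i by auto
  ultimately show "c \<in> set w" by auto
qed

lemma filter_v_x: "filter (\<lambda>c. c = x) v = [x, x]"
proof -
  obtain i where i: "i \<in> set ns" using ns_nonempty by (cases ns) auto
  have "filter (\<lambda>c. c = x) (filter (\<lambda>c. c = z i \<or> c = t i \<or> c = x) v) = [x, x]"
    using filter_v_ztx[OF i i] i by simp
  moreover have "(\<lambda>c. (c = z i \<or> c = t i \<or> c = x) \<and> c = x) = (\<lambda>c. c = x)" by auto
  ultimately show ?thesis by simp
qed

end

locale zt_identity_split = zt_identity +
  fixes P M Q :: word
  assumes v_split: "v = P @ x # M @ x # Q"
    and x_notin_P: "x \<notin> set P" and x_notin_M: "x \<notin> set M" and x_notin_Q: "x \<notin> set Q"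
begin

lemma filter_split_parts:
  assumes i: "i \<in> set ns"
  shows "filter (\<lambda>c. c = z i \<or> c = t i \<or> c = x) P = [z i, t i]"
    and "filter (\<lambda>c. c = z i \<or> c = t i \<or> c = x) M = []"
    and "filter (\<lambda>c. c = z i \<or> c = t i \<or> c = x) Q = [z i]"
proof -
  let ?K = "\<lambda>c. c = z i \<or> c = t i \<or> c = x"
  have "filter ?K P @ x # filter ?K M @ x # filter ?K Q = [z i, t i] @ x # [] @ x # [z i]"
    using filter_v_ztx[OF i i] v_split by simp
  then have "filter ?K P = [z i, t i] \<and> filter ?K M = [] \<and> filter ?K Q = [z i]"
    by (rule split_two_occurrences_unique) (use x_notin_P x_notin_M i in auto)
  then show "filter ?K P = [z i, t i]" "filter ?K M = []" "filter ?K Q = [z i]" by simp_all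
qed

lemma letter_cases: "c \<in> set v \<Longrightarrow> c \<noteq> x \<Longrightarrow> \<exists>i\<in>set ns. c = z i \<or> c = t i"
  using set_v_subset by auto

lemma M_Nil: "M = []"
proof (rule ccontr)
  assume "M \<noteq> []"
  then obtain c where c: "c \<in> set M" by (cases M) auto
  then have "c \<in> set v" "c \<noteq> x" using v_split x_notin_M by auto
  then obtain i where i: "i \<in> set ns" "c = z i \<or> c = t i" using letter_cases by blast
  then have "c \<in> set (filter (\<lambda>c. c = z i \<or> c = t i \<or> c = x) M)" using c by auto
  with filter_split_parts(2)[OF i(1)] show False by simp
qed

lemma v_eq: "v = P @ [x, x] @ Q"
  using v_split M_Nil by simp

lemma set_Q: "set Q = z ` set ns"
proof
  show "set Q \<subseteq> z ` set ns"
  proof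
    fix c assume c: "c \<in> set Q"
    then have "c \<in> set v" "c \<noteq> x" using v_split x_notin_Q by auto
    then obtain i where i: "i \<in> set ns" "c = z i \<or> c = t i" using letter_cases by blast
    then have "c \<in> set (filter (\<lambda>c. c = z i \<or> c = t i \<or> c = x) Q)" using c by auto
    then show "c \<in> z ` set ns" using filter_split_parts(3)[OF i(1)] i(1) by auto
  qed
  show "z ` set ns \<subseteq> set Q"
  proof
    fix c assume "c \<in> z ` set ns"
    then obtain i where i: "i \<in> set ns" "c = z i" by auto
    then have "c \<in> set (filter (\<lambda>c. c = z i \<or> c = t i \<or> c = x) Q)"
      using filter_split_parts(3)[OF i(1)] by simp
    then show "c \<in> set Q" by simp
  qed
qed

lemma set_P: "set P = z ` set ns \<union> t ` set ns"
proof
  show "set P \<subseteq> z ` set ns \<union> t ` set ns"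
  proof
    fix c assume "c \<in> set P"
    then have "c \<in> set v" "c \<noteq> x" using v_split x_notin_P by auto
    then show "c \<in> z ` set ns \<union> t ` set ns" using letter_cases by blast
  qed
  show "z ` set ns \<union> t ` set ns \<subseteq> set P"
  proof
    fix c assume "c \<in> z ` set ns \<union> t ` set ns"
    then obtain i where i: "i \<in> set ns" "c = z i \<or> c = t i" by auto
    then have "c \<in> set (filter (\<lambda>c. c = z i \<or> c = t i \<or> c = x) P)"
      using filter_split_parts(1)[OF i(1)] by auto
    then show "c \<in> set P" by simp
  qed
qed

lemma distinct_Q: "distinct Q"
proof (rule distinct_if_filter_singletons, rule ballI)
  fix a assume "a \<in> set Q"
  then obtain i where i: "i \<in> set ns" "a = z i" using set_Q by auto
  have "filter (\<lambda>c. c = a) Q = filter (\<lambda>c. c = a) (filter (\<lambda>c. c = z i \<or> c = t i \<or> c = x) Q)"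
    by (rule filter_eq_filter_filter[symmetric]) (simp add: i)
  also have "\<dots> = [a]" using filter_split_parts(3)[OF i(1)] i by simp
  finally show "filter (\<lambda>c. c = a) Q = [a]" .
qed

lemma distinct_P: "distinct P"
proof (rule distinct_if_filter_singletons, rule ballI)
  fix a assume "a \<in> set P"
  then obtain i where i: "i \<in> set ns" "a = z i \<or> a = t i" using set_P by auto
  have "filter (\<lambda>c. c = a) P = filter (\<lambda>c. c = a) (filter (\<lambda>c. c = z i \<or> c = t i \<or> c = x) P)"
    by (rule filter_eq_filter_filter[symmetric]) (use i in auto)
  also have "\<dots> = [a]" using filter_split_parts(1)[OF i(1)] i by auto
  finally show "filter (\<lambda>c. c = a) P = [a]" .
qed

lemma not_precedes_t_z:
  assumes p: "p \<in> set ns" and q: "q \<in> set ns" and "q \<le> p"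
  shows "\<not> precedes P (t p) (z q)"
proof
  assume tz: "precedes P (t p) (z q)"
  let ?K = "\<lambda>c. c = z q \<or> c = t p \<or> c = x"
  have "filter ?K P = [t p, z q]"
    using distinct_P tz by (rule filter_eq_if_precedes) (use x_notin_P in auto)
  moreover have "filter ?K Q = [z q]"
    using distinct_Q by (rule filter_eq_singleton) (use x_notin_Q set_Q p q letters_distinct(3,4) in blast)+
  ultimately have "filter ?K v = [t p, z q, x, x, z q]" using v_eq by simp
  moreover have "filter ?K v = [z q, t p, x, x, z q]" using filter_v_ztx[OF q p \<open>q \<le> p\<close>] .
  ultimately show False using p q by simp
qed

lemma not_precedes_z_t:
  assumes p: "p \<in> set ns" and q: "q \<in> set ns" and "q < p"
  shows "\<not> precedes P (z p) (t q)"
proof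
  assume zt: "precedes P (z p) (t q)"
  let ?K = "\<lambda>c. c = z p \<or> c = t q \<or> c = x"
  have "filter ?K P = [z p, t q]"
    using distinct_P zt by (rule filter_eq_if_precedes) (use x_notin_P in auto)
  moreover have "filter ?K Q = [z p]"
    using distinct_Q by (rule filter_eq_singleton) (use x_notin_Q set_Q p q letters_distinct(3,4) in blast)+
  ultimately have "filter ?K v = [z p, t q, x, x, z p]" using v_eq by simp
  then have "filter ?K w = [z p, t q, x, x, z p]" using p q by (intro filter_w_if_abcca) auto
  then show False using filter_w_tzx[OF p q \<open>q < p\<close>] p q by simp
qed

lemma sorted_P: "sorted_wrt (\<lambda>a b. rank a < rank b) P"
proof (rule sorted_wrt_if_precedes)
  fix a b assume ab: "precedes P a b"
  then have "a \<in> set P" "b \<in> set P" "a \<noteq> b" using distinct_P by (auto simp: precedes_def)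
  then obtain p q where p: "p \<in> set ns" "a = z p \<or> a = t p" and q: "q \<in> set ns" "b = z q \<or> b = t q"
    using set_P by blast
  consider "a = z p" "b = z q" | "a = z p" "b = t q" | "a = t p" "b = z q" | "a = t p" "b = t q"
    using p(2) q(2) by blast
  then show "rank a < rank b"
  proof cases
    case 1
    show ?thesis
    proof (rule ccontr)
      assume "\<not> ?thesis"
      with 1 \<open>a \<noteq> b\<close> p q have "q < p" by auto
      \<comment> \<open>\<open>t\<^sub>q\<close> would have to come before \<open>z\<^sub>q\<close> or after \<open>z\<^sub>p\<close>\<close>
      have "t q \<in> set P" using set_P q by auto
      then have "precedes P (t q) (z q) \<or> precedes P (z p) (t q)"
        using precedes_cases[OF ab] 1 p q by auto
      then show False using not_precedes_t_z[OF q(1) q(1)] not_precedes_z_t[OF p(1) q(1) \<open>q < p\<close>] 1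
        by auto
    qed
  next
    case 2
    then have "\<not> q < p" using not_precedes_z_t p q ab by blast
    then show ?thesis using 2 p q by simp
  next
    case 3
    then have "\<not> q \<le> p" using not_precedes_t_z p q ab by blast
    then show ?thesis using 3 p q by simp
  next
    case 4
    show ?thesis
    proof (rule ccontr)
      assume "\<not> ?thesis"
      with 4 \<open>a \<noteq> b\<close> p q have "q < p" by auto
      have "z p \<in> set P" using set_P p by auto
      then have "precedes P (z p) (t q) \<or> precedes P (t p) (z p)"
        using precedes_cases[OF ab] 4 p q by auto
      then show False using not_precedes_z_t[OF p(1) q(1) \<open>q < p\<close>] not_precedes_t_z[OF p(1) p(1)] 4
        by auto
    qed
  qed
qed

lemma P_eq: "P = zt_part"
  by (rule sorted_wrt_rank_unique[OF sorted_P sorted_zt_part]) (simp only: set_P set_zt_part)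

lemma sorted_Q: "sorted_wrt (\<lambda>a b. rank a < rank b) Q"
proof (rule sorted_wrt_if_precedes)
  fix a b assume ab: "precedes Q a b"
  then have "a \<in> set Q" "b \<in> set Q" "a \<noteq> b" using distinct_Q by (auto simp: precedes_def)
  then obtain p q where p: "p \<in> set ns" "a = z p" and q: "q \<in> set ns" "b = z q"
    using set_Q by auto
  show "rank a < rank b"
  proof (rule ccontr)
    assume "\<not> ?thesis"
    with \<open>a \<noteq> b\<close> p q have "q < p" by auto
    let ?K = "\<lambda>c. c = z q \<or> c = t q \<or> c = z p"
    have "filter ?K P = [z q, t q, z p]" using filter_zt_part_ztz[OF p(1) q(1) \<open>q < p\<close>] P_eq by simp
    moreover have "filter ?K Q = [z p, z q]"
      using distinct_Q ab unfolding p(2) q(2)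
      by (rule filter_eq_if_precedes) (use set_Q q letters_distinct(3) in blast)+
    ultimately have "filter ?K v = [z q, t q, z p, z p, z q]" using v_eq p q by simp
    then have "filter ?K w = [z q, t q, z p, z p, z q]"
      using p q \<open>q < p\<close> by (intro filter_w_if_abcca) auto
    then show False using filter_w_ztz[OF p(1) q(1) \<open>q < p\<close>] p q \<open>q < p\<close> by simp
  qed
qed

lemma Q_eq: "Q = z_part"
  by (rule sorted_wrt_rank_unique[OF sorted_Q sorted_z_part]) (simp add: set_Q)

end

lemma (in zt_identity) v_eq_w: "v = w"
proof -
  obtain P M Q where split: "v = P @ x # M @ x # Q" "x \<notin> set P" "x \<notin> set M" "x \<notin> set Q"
    using split_two_occurrences[OF filter_v_x] by blast
  interpret zt_identity_split S ns x z t v P M Q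
    by unfold_locales (fact split)+
  show ?thesis using split(1) P_eq M_Nil Q_eq by simp
qed

lemma (in zt_word) isoterm_w: "isoterm S w"
  unfolding isoterm_def
proof (intro allI impI)
  fix v assume "is_word v \<and> satisfies S w v"
  then interpret zt_identity S ns x z t v by unfold_locales blast
  show "v = w" by (rule v_eq_w)
qed

theorem lemma3p7:
  fixes S :: "'a::monoid_mult itself"
    and x y t :: nat
  assumes "distinct [x, y, t]"
    and "isoterm S [y, x, x, t, y]"
    and "isoterm S [y, t, x, x, y]"
  shows "\<forall>(n::nat) (x' :: nat) (z :: nat \<Rightarrow> nat) (t' :: nat \<Rightarrow> nat).
           n \<ge> 1 \<and> distinct (x' # map z [1..<n+1] @ map t' [1..<n+1]) \<longrightarrow>
           isoterm S (concat (map (\<lambda>i. [z i, t' i]) [1..<n+1]) @ [x', x'] @ map z [1..<n+1])"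
proof (intro allI impI)
  fix n x' :: nat and z t' :: "nat \<Rightarrow> nat"
  assume letters: "n \<ge> 1 \<and> distinct (x' # map z [1..<n+1] @ map t' [1..<n+1])"
  \<comment> \<open>only the isoterm \<open>ytxxy\<close> is needed\<close>
  interpret zt_word S "[1..<n+1]" x' z t'
  proof
    show "isoterm S [a, b, c, c, a]" if "distinct [a, b, c]" for a b c
      using isoterm_abcca_if_ytxxy[OF assms(3,1) that] .
    show "[1..<n+1] \<noteq> []" using letters by simp
    show "sorted_wrt (<) [1..<n+1]" by (rule sorted_wrt_upt)
    show "distinct (x' # map z [1..<n+1] @ map t' [1..<n+1])" using letters by blast
  qed
  show "isoterm S (concat (map (\<lambda>i. [z i, t' i]) [1..<n+1]) @ [x', x'] @ map z [1..<n+1])"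
    by (rule isoterm_w)
qed

end
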